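(* Let $(X,f)$ be a dynamical system (with $X$ a compact metric space and $f:X\to X$ continuous) which has only finitely many basic sets. Then every terminal basic set is an attractor, and hence is visible. Furthermore, the union $\bigcup_B G(B)$ of the basins of all the basic sets $B$ is a dense open subset of $X$.
   Context: For a compact metric space $(X,d)$ and continuous $f:X\to X$: the chain relation $\mathcal{C}f\subset X\times X$ consists of the pairs $(x,y)$ such that for every $\epsilon>0$ there is a sequence $x_0=x,x_1,\dots,x_n=y$ with $n\ge 1$ and $d(f(x_i),x_{i+1})\le\epsilon$ for $0\le i<n$. Write $\mathcal{C}f(x)=\{y:(x,y)\in\mathcal{C}f\}$. A point $x$ is chain recurrent if $(x,x)\in\mathcal{C}f$; the basic sets (chain components) are the equivalence classes of chain recurrent points under the relation "$(x,y)\in\mathcal{C}f$ and $(y,x)\in\mathcal{C}f$". A basic set $B$ is terminal if $x\in B$ implies $\mathcal{C}f(x)\subset B$. For $x\in X$, $\omega f(x)$ is the set of limit points of the sequence $f(x),f^2(x),\dots$. For a closed set $A$ with $f(A)\subset A$, the basin of $A$ is the open set $G(A)=\operatorname{int}\{x:\omega f(x)\subset A\}$. A basic set is visible if its basin is nonempty. A set $A$ is an attractor if there is a closed set $U$ with $f(U)\subset \operatorname{int} U$ and $A=\bigcap_{n\ge 0}f^n(U)$. *)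

theory Defs
  imports "HOL-Analysis.Analysis"
begin

text \<open>The space X is the whole type 'a (a compact metric space). Chain relation:\<close>
definition chain_rel :: "('a::metric_space \<Rightarrow> 'a) \<Rightarrow> ('a \<times> 'a) set" where
  "chain_rel f = {(x, y). \<forall>e>0. \<exists>n\<ge>1. \<exists>xs :: nat \<Rightarrow> 'a.
      xs 0 = x \<and> xs n = y \<and> (\<forall>i<n. dist (f (xs i)) (xs (Suc i)) \<le> e)}"

definition chain_recurrent :: "('a::metric_space \<Rightarrow> 'a) \<Rightarrow> 'a \<Rightarrow> bool" where
  "chain_recurrent f x \<longleftrightarrow> (x, x) \<in> chain_rel f"

definition basic_sets :: "('a::metric_space \<Rightarrow> 'a) \<Rightarrow> 'a set set" where
  "basic_sets f = {B. \<exists>x. chain_recurrent f x \<and>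
      B = {y. chain_recurrent f y \<and> (x, y) \<in> chain_rel f \<and> (y, x) \<in> chain_rel f}}"

definition terminal :: "('a::metric_space \<Rightarrow> 'a) \<Rightarrow> 'a set \<Rightarrow> bool" where
  "terminal f B \<longleftrightarrow> B \<in> basic_sets f \<and> (\<forall>x\<in>B. chain_rel f `` {x} \<subseteq> B)"

definition omega_limit :: "('a::metric_space \<Rightarrow> 'a) \<Rightarrow> 'a \<Rightarrow> 'a set" where
  "omega_limit f x = {y. \<forall>e>0. \<forall>N. \<exists>n\<ge>N. n \<ge> 1 \<and> dist ((f ^^ n) x) y < e}"

definition basin :: "('a::metric_space \<Rightarrow> 'a) \<Rightarrow> 'a set \<Rightarrow> 'a set" where
  "basin f A = interior {x. omega_limit f x \<subseteq> A}"

definition visible :: "('a::metric_space \<Rightarrow> 'a) \<Rightarrow> 'a set \<Rightarrow> bool" where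
  "visible f B \<longleftrightarrow> basin f B \<noteq> {}"

definition attractor :: "('a::metric_space \<Rightarrow> 'a) \<Rightarrow> 'a set \<Rightarrow> bool" where
  "attractor f A \<longleftrightarrow> (\<exists>U. closed U \<and> f ` U \<subseteq> interior U \<and> A = (\<Inter>n. (f ^^ n) ` U))"

end

theory Submission
  imports Defs
begin

text \<open>The chain relation is closed, so basic sets are closed and every \<open>\<omega>\<close>-limit set lies in a
  single basic set. For a terminal basic set \<open>B\<close>, the points reachable from \<open>B\<close> by
  \<open>\<epsilon>\<close>-chains form an open set whose closure \<open>U\<close> is mapped into its interior. Since there
  are only finitely many basic sets, for small \<open>\<epsilon>\<close> no chain recurrent point outside \<open>B\<close> lies
  in \<open>U\<close>; every point of the maximal invariant set \<open>\<Inter>\<^sub>n f\<^sup>n(U)\<close> is chain reachable from a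
  chain recurrent point of it, so this set is \<open>B\<close>. For density, the sets
  \<open>{x. \<omega>(x) \<subseteq> B}\<close> form a finite partition of the space into \<open>G\<^sub>\<delta>\<close> sets, and by Baire's
  theorem the interiors of the members of such a partition are dense.\<close>

section \<open>\<open>\<epsilon>\<close>-chains\<close>

definition eps_chain :: "('a::metric_space \<Rightarrow> 'a) \<Rightarrow> real \<Rightarrow> 'a \<Rightarrow> 'a \<Rightarrow> bool" where
  "eps_chain f e x y \<longleftrightarrow> (\<exists>n\<ge>1. \<exists>xs :: nat \<Rightarrow> 'a.
      xs 0 = x \<and> xs n = y \<and> (\<forall>i<n. dist (f (xs i)) (xs (Suc i)) \<le> e))"

lemma chain_rel_iff_eps_chain: "(x, y) \<in> chain_rel f \<longleftrightarrow> (\<forall>e>0. eps_chain f e x y)"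
  unfolding chain_rel_def eps_chain_def by auto

lemma eps_chain_step: "dist (f x) y \<le> e \<Longrightarrow> eps_chain f e x y"
  unfolding eps_chain_def by (intro exI[of _ 1] conjI exI[of _ "\<lambda>i. if i = 0 then x else y"]) auto

lemma eps_chain_nonneg:
  assumes "eps_chain f e x y"
  shows "0 \<le> e"
proof -
  obtain n xs where "n \<ge> 1" "\<forall>i<n. dist (f (xs i)) (xs (Suc i)) \<le> e"
    using assms unfolding eps_chain_def by blast
  then have "dist (f (xs 0)) (xs 1) \<le> e" by simp
  then show ?thesis using zero_le_dist order_trans by blast
qed

lemma eps_chain_mono: "eps_chain f e x y \<Longrightarrow> e \<le> e' \<Longrightarrow> eps_chain f e' x y"
  unfolding eps_chain_def by (blast intro: order_trans)

lemma eps_chain_trans: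
  assumes "eps_chain f e x y" "eps_chain f e y z"
  shows "eps_chain f e x z"
proof -
  obtain n xs where n: "n \<ge> 1" "xs 0 = x" "xs n = y" "\<forall>i<n. dist (f (xs i)) (xs (Suc i)) \<le> e"
    using assms(1) unfolding eps_chain_def by blast
  obtain m ys where m: "m \<ge> 1" "ys 0 = y" "ys m = z" "\<forall>i<m. dist (f (ys i)) (ys (Suc i)) \<le> e"
    using assms(2) unfolding eps_chain_def by blast
  define zs where "zs i = (if i \<le> n then xs i else ys (i - n))" for i
  have "dist (f (zs i)) (zs (Suc i)) \<le> e" if "i < n + m" for i
  proof (cases "i < n")
    case True
    then show ?thesis using n by (auto simp: zs_def)
  next
    case False
    then obtain j where "i = n + j" "j < m"
      using \<open>i < n + m\<close> by (metis add_less_cancel_left le_iff_add not_less)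
    then show ?thesis using m n by (cases j) (auto simp: zs_def)
  qed
  moreover have "zs 0 = x" "zs (n + m) = z" using n m by (auto simp: zs_def)
  ultimately show ?thesis unfolding eps_chain_def using n by (intro exI[of _ "n + m"]) auto
qed

lemma eps_chain_extend_end:
  assumes "eps_chain f e x y" "dist y z \<le> d"
  shows "eps_chain f (e + d) x z"
proof -
  obtain n xs where n: "n \<ge> 1" "xs 0 = x" "xs n = y" "\<forall>i<n. dist (f (xs i)) (xs (Suc i)) \<le> e"
    using assms(1) unfolding eps_chain_def by blast
  have "0 \<le> d" using assms(2) zero_le_dist order_trans by blast
  have "dist (f ((xs(n := z)) i)) ((xs(n := z)) (Suc i)) \<le> e + d" if "i < n" for i
  proof (cases "Suc i = n")
    case True
    have "dist (f (xs i)) z \<le> dist (f (xs i)) y + dist y z" by (rule dist_triangle)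
    then show ?thesis using True that n assms(2) by auto
  next
    case False
    then show ?thesis using \<open>0 \<le> d\<close> that n by auto
  qed
  then show ?thesis unfolding eps_chain_def using n
    by (intro exI[of _ n] conjI exI[of _ "xs(n := z)"]) auto
qed

lemma eps_chain_extend_start:
  assumes "eps_chain f e x y" "dist (f x') (f x) \<le> d"
  shows "eps_chain f (e + d) x' y"
proof -
  obtain n xs where n: "n \<ge> 1" "xs 0 = x" "xs n = y" "\<forall>i<n. dist (f (xs i)) (xs (Suc i)) \<le> e"
    using assms(1) unfolding eps_chain_def by blast
  have "0 \<le> d" using assms(2) zero_le_dist order_trans by blast
  have "dist (f ((xs(0 := x')) i)) ((xs(0 := x')) (Suc i)) \<le> e + d" if "i < n" for i
  proof (cases "i = 0")
    case True
    have "dist (f x') (xs 1) \<le> dist (f x') (f x) + dist (f x) (xs 1)" by (rule dist_triangle)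
    then show ?thesis using True n assms(2) by fastforce
  next
    case False
    then show ?thesis using \<open>0 \<le> d\<close> that n by auto
  qed
  then show ?thesis unfolding eps_chain_def using n
    by (intro exI[of _ n] conjI exI[of _ "xs(0 := x')"]) auto
qed

lemma eps_chain_orbit: "m < n \<Longrightarrow> eps_chain f 0 ((f ^^ m) x) ((f ^^ n) x)"
  unfolding eps_chain_def by (intro exI[of _ "n - m"] conjI exI[of _ "\<lambda>i. (f ^^ (m + i)) x"]) auto

lemma eps_chain_last_step:
  assumes "eps_chain f e x y"
  obtains p where "dist (f p) y \<le> e" "p = x \<or> eps_chain f e x p"
proof -
  obtain n xs where n: "n \<ge> 1" "xs 0 = x" "xs n = y" "\<forall>i<n. dist (f (xs i)) (xs (Suc i)) \<le> e"
    using assms unfolding eps_chain_def by blast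
  have "xs (n - 1) = x \<or> eps_chain f e x (xs (n - 1))"
    using n unfolding eps_chain_def by (cases "n = 1") (auto intro!: exI[of _ "n - 1"])
  moreover have "dist (f (xs (n - 1))) y \<le> e" using n(4)[rule_format, of "n - 1"] n(1,3) by simp
  ultimately show thesis using that by blast
qed

lemma chain_rel_trans: "(x, y) \<in> chain_rel f \<Longrightarrow> (y, z) \<in> chain_rel f \<Longrightarrow> (x, z) \<in> chain_rel f"
  unfolding chain_rel_iff_eps_chain by (meson eps_chain_trans)

lemma chain_rel_step: "(x, f x) \<in> chain_rel f"
  unfolding chain_rel_iff_eps_chain by (auto intro: eps_chain_step)

lemma chain_rel_orbit: "m < n \<Longrightarrow> ((f ^^ m) x, (f ^^ n) x) \<in> chain_rel f"
  unfolding chain_rel_iff_eps_chain by (meson eps_chain_orbit eps_chain_mono less_le)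

definition chain_class :: "('a::metric_space \<Rightarrow> 'a) \<Rightarrow> 'a \<Rightarrow> 'a set" where
  "chain_class f x = {y. chain_recurrent f y \<and> (x, y) \<in> chain_rel f \<and> (y, x) \<in> chain_rel f}"

lemma basic_sets_eq: "basic_sets f = chain_class f ` {x. chain_recurrent f x}"
  unfolding basic_sets_def chain_class_def image_def by auto

lemma mem_chain_class_self: "chain_recurrent f x \<Longrightarrow> x \<in> chain_class f x"
  unfolding chain_class_def chain_recurrent_def by blast

lemma basic_set_eq_chain_class:
  assumes "B \<in> basic_sets f" "y \<in> B"
  shows "B = chain_class f y"
proof -
  obtain x where "B = chain_class f x" using assms(1) unfolding basic_sets_eq by blast
  moreover have "(x, y) \<in> chain_rel f" "(y, x) \<in> chain_rel f"
    using assms(2) calculation unfolding chain_class_def by blast+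
  then have "(y, z) \<in> chain_rel f \<and> (z, y) \<in> chain_rel f \<longleftrightarrow>
      (x, z) \<in> chain_rel f \<and> (z, x) \<in> chain_rel f"
    for z by (meson chain_rel_trans)
  ultimately show ?thesis unfolding chain_class_def by blast
qed

lemma basic_sets_disjoint:
  "B \<in> basic_sets f \<Longrightarrow> B' \<in> basic_sets f \<Longrightarrow> y \<in> B \<Longrightarrow> y \<in> B' \<Longrightarrow> B = B'"
  using basic_set_eq_chain_class by metis

lemma basic_set_nonempty: "B \<in> basic_sets f \<Longrightarrow> B \<noteq> {}"
  unfolding basic_sets_eq using mem_chain_class_self by blast

lemma basic_set_chain_recurrent: "B \<in> basic_sets f \<Longrightarrow> y \<in> B \<Longrightarrow> chain_recurrent f y"
  unfolding basic_sets_def by blast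

lemma terminalD:
  assumes "terminal f B"
  shows "B \<in> basic_sets f" "b \<in> B \<Longrightarrow> (b, y) \<in> chain_rel f \<Longrightarrow> y \<in> B"
  using assms unfolding terminal_def by blast+

section \<open>Chain neighbourhoods\<close>

text \<open>The strict bound \<open>e < \<epsilon>\<close> is what makes this neighbourhood of \<open>B\<close> open.\<close>
definition chain_nbhd :: "('a::metric_space \<Rightarrow> 'a) \<Rightarrow> 'a set \<Rightarrow> real \<Rightarrow> 'a set" where
  "chain_nbhd f B \<epsilon> = {y. \<exists>b\<in>B. \<exists>e<\<epsilon>. eps_chain f e b y}"

lemma open_chain_nbhd: "open (chain_nbhd f B \<epsilon>)"
  unfolding open_dist
proof
  fix y assume "y \<in> chain_nbhd f B \<epsilon>"
  then obtain b e where b: "b \<in> B" "e < \<epsilon>" "eps_chain f e b y" unfolding chain_nbhd_def by blast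
  show "\<exists>d>0. \<forall>z. dist z y < d \<longrightarrow> z \<in> chain_nbhd f B \<epsilon>"
  proof (intro exI[of _ "\<epsilon> - e"] conjI allI impI)
    fix z assume "dist z y < \<epsilon> - e"
    then have "e + dist y z < \<epsilon>" by (simp add: dist_commute)
    moreover have "eps_chain f (e + dist y z) b z" by (rule eps_chain_extend_end[OF b(3)]) simp
    ultimately show "z \<in> chain_nbhd f B \<epsilon>"
      unfolding chain_nbhd_def using b(1) by blast
  qed (use b in simp)
qed

lemma chain_nbhd_mono: "\<epsilon> \<le> \<epsilon>' \<Longrightarrow> chain_nbhd f B \<epsilon> \<subseteq> chain_nbhd f B \<epsilon>'"
  unfolding chain_nbhd_def by force

lemma subset_chain_nbhd:
  assumes "\<And>b. b \<in> B \<Longrightarrow> chain_recurrent f b" "\<epsilon> > 0"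
  shows "B \<subseteq> chain_nbhd f B \<epsilon>"
proof
  fix b assume "b \<in> B"
  then have "eps_chain f (\<epsilon> / 2) b b"
    using assms unfolding chain_recurrent_def chain_rel_iff_eps_chain by simp
  then show "b \<in> chain_nbhd f B \<epsilon>"
    unfolding chain_nbhd_def using \<open>b \<in> B\<close> \<open>\<epsilon> > 0\<close>
      by (intro CollectI bexI[of _ b] exI[of _ "\<epsilon> / 2"]) auto
qed

lemma closure_chain_nbhd_subset:
  assumes "\<epsilon> > 0"
  shows "closure (chain_nbhd f B \<epsilon>) \<subseteq> chain_nbhd f B (2 * \<epsilon>)"
proof
  fix y assume "y \<in> closure (chain_nbhd f B \<epsilon>)"
  then obtain q where q: "q \<in> chain_nbhd f B \<epsilon>" "dist q y < \<epsilon>"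
    using assms unfolding closure_approachable by blast
  then obtain b e where b: "b \<in> B" "e < \<epsilon>" "eps_chain f e b q" unfolding chain_nbhd_def by blast
  have "eps_chain f (e + dist q y) b y" by (rule eps_chain_extend_end[OF b(3)]) simp
  then show "y \<in> chain_nbhd f B (2 * \<epsilon>)"
    unfolding chain_nbhd_def using b(1,2) q(2)
      by (intro CollectI bexI[of _ b] exI[of _ "e + dist q y"]) auto
qed

lemma chain_nbhd_chain_rel:
  assumes "y \<in> chain_nbhd f B \<epsilon>" "(y, z) \<in> chain_rel f"
  shows "z \<in> chain_nbhd f B \<epsilon>"
proof -
  obtain b e where b: "b \<in> B" "e < \<epsilon>" "eps_chain f e b y"
    using assms(1) unfolding chain_nbhd_def by blast
  define e' where "e' = (e + \<epsilon>) / 2"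
  have e': "e < e'" "e' < \<epsilon>" "e' > 0" using b(2) eps_chain_nonneg[OF b(3)] unfolding e'_def by auto
  have "eps_chain f e' b y" by (rule eps_chain_mono[OF b(3)]) (use e' in simp)
  moreover have "eps_chain f e' y z" using assms(2) e'(3) unfolding chain_rel_iff_eps_chain by blast
  ultimately have "eps_chain f e' b z" by (rule eps_chain_trans)
  then show ?thesis unfolding chain_nbhd_def using b(1) e'(2) by blast
qed

lemma omega_limitI_sequentially:
  assumes "\<And>k. k \<le> n k" "(\<lambda>k. (f ^^ n k) x) \<longlonglongrightarrow> l"
  shows "l \<in> omega_limit f x"
  unfolding omega_limit_def
proof (intro CollectI allI impI)
  fix e :: real and N assume "e > 0"
  then obtain M where M: "\<And>k. k \<ge> M \<Longrightarrow> dist ((f ^^ n k) x) l < e"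
    using assms(2) unfolding lim_sequentially by blast
  define k where "k = max M (max N 1)"
  show "\<exists>m\<ge>N. m \<ge> 1 \<and> dist ((f ^^ m) x) l < e"
    using M[of k] assms(1)[of k] by (intro exI[of _ "n k"]) (auto simp: k_def)
qed

lemma funpow_image_subset: "f ` U \<subseteq> U \<Longrightarrow> (f ^^ n) ` U \<subseteq> U"
  by (induction n) (auto simp: image_subset_iff)

lemma funpow_image_antimono:
  assumes "f ` U \<subseteq> U" "m \<le> n"
  shows "(f ^^ n) ` U \<subseteq> (f ^^ m) ` U"
proof -
  have "(f ^^ n) ` U = (f ^^ m) ` ((f ^^ (n - m)) ` U)"
    using assms(2) by (metis funpow_add image_comp le_add_diff_inverse)
  then show ?thesis using funpow_image_subset[OF assms(1)] by blast
qed

lemma funpow_image_invariant: "f ` B = B \<Longrightarrow> (f ^^ n) ` B = B"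
proof (induction n)
  case (Suc n)
  have "(f ^^ Suc n) ` B = f ` (f ^^ n) ` B" by (simp add: image_image)
  then show ?case using Suc by simp
qed simp

lemma backward_orbit:
  assumes "A \<subseteq> f ` A" "a \<in> A"
  obtains xs where "xs 0 = a" "\<And>k. xs k \<in> A" "\<And>k. f (xs (Suc k)) = xs k"
proof -
  have "\<forall>w\<in>A. \<exists>v. v \<in> A \<and> f v = w" using assms(1) by blast
  then obtain g where g: "\<And>w. w \<in> A \<Longrightarrow> g w \<in> A \<and> f (g w) = w" by metis
  define xs where "xs k = (g ^^ k) a" for k
  have in_A: "xs k \<in> A" for k unfolding xs_def by (induction k) (use assms(2) g in auto)
  have orbit: "f (xs (Suc k)) = xs k" for k using g[OF in_A[of k]] by (simp add: xs_def)
  show thesis by (rule that[where xs = xs, OF _ in_A orbit]) (simp add: xs_def)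
qed

lemma backward_orbit_funpow:
  assumes "\<And>k. f (xs (Suc k)) = xs k"
  shows "(f ^^ d) (xs (k + d)) = xs k"
proof (induction d)
  case (Suc d)
  have "(f ^^ Suc d) (xs (k + Suc d)) = (f ^^ d) (xs (k + d))"
    by (simp add: funpow_swap1 assms)
  then show ?case using Suc by simp
qed simp

lemma trapped_core_subset: "(\<Inter>n. (f ^^ n) ` U) \<subseteq> U"
  using INT_lower[of 0 UNIV "\<lambda>n. (f ^^ n) ` U"] by simp

lemma nested_closed_Inter_nonempty:
  fixes K :: "nat \<Rightarrow> 'a::topological_space set"
  assumes "compact (UNIV :: 'a set)" "\<And>n. closed (K n)" "\<And>n. K n \<noteq> {}"
    and "\<And>m n. m \<le> n \<Longrightarrow> K n \<subseteq> K m"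
  shows "(\<Inter>n. K n) \<noteq> {}"
proof -
  have "UNIV \<inter> (\<Inter>n\<in>UNIV. K n) \<noteq> {}"
  proof (rule compact_imp_fip_image[OF assms(1) assms(2)])
    fix I :: "nat set" assume "finite I"
    have "K (Max (insert 0 I)) \<subseteq> K i" if "i \<in> I" for i
      by (rule assms(4)[OF Max_ge]) (use \<open>finite I\<close> that in auto)
    then have "K (Max (insert 0 I)) \<subseteq> (\<Inter>i\<in>I. K i)" by blast
    then show "UNIV \<inter> (\<Inter>i\<in>I. K i) \<noteq> {}" using assms(3) by blast
  qed
  then show ?thesis by simp
qed

section \<open>A Baire category argument\<close>

lemma finite_closed_cover_interior:
  assumes "finite I" "\<forall>i\<in>I. closed (F i)" "open V" "V \<noteq> {}" "V \<subseteq> (\<Union>i\<in>I. F i)"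
  shows "\<exists>i\<in>I. interior (F i) \<inter> V \<noteq> {}"
  using assms(1,2,3,4,5)
proof (induction I arbitrary: V rule: finite_induct)
  case empty
  then show ?case by simp
next
  case (insert j I)
  show ?case
  proof (cases "V \<subseteq> F j")
    case True
    then have "V \<subseteq> interior (F j)" using insert.prems(2) by (simp add: interior_maximal)
    then show ?thesis using insert.prems(3) by blast
  next
    case False
    then have "\<exists>i\<in>I. interior (F i) \<inter> (V - F j) \<noteq> {}"
      using insert by (intro insert.IH) auto
    then show ?thesis by blast
  qed
qed

lemma gdelta_in_euclidean_iff:
  "gdelta_in euclidean S \<longleftrightarrow> (\<exists>\<G>. countable \<G> \<and> (\<forall>T\<in>\<G>. open T) \<and> \<Inter>\<G> = S)"
  by (simp add: gdelta_in_alt intersection_of_def subset_eq)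

lemma gdelta_dense_Int_nonempty:
  fixes U :: "'a::metric_space set"
  assumes lc: "locally_compact_space (euclidean :: 'a topology)"
    and U: "open U" "U \<noteq> {}"
    and "gdelta_in euclidean E1" "U \<subseteq> closure E1"
    and "gdelta_in euclidean E2" "U \<subseteq> closure E2"
  shows "E1 \<inter> E2 \<noteq> {}"
proof -
  obtain \<G>1 where G1: "countable \<G>1" "\<forall>T\<in>\<G>1. open T" "U \<subseteq> closure (\<Inter>\<G>1)" "\<Inter>\<G>1 = E1"
    using assms(4,5) unfolding gdelta_in_euclidean_iff by blast
  obtain \<G>2 where G2: "countable \<G>2" "\<forall>T\<in>\<G>2. open T" "U \<subseteq> closure (\<Inter>\<G>2)" "\<Inter>\<G>2 = E2"
    using assms(6,7) unfolding gdelta_in_euclidean_iff by blast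
  define \<G> where "\<G> = (\<lambda>T. T \<union> - closure U) ` (\<G>1 \<union> \<G>2)"
  have dense: "closure T = UNIV" if T: "T \<in> \<G>" for T
  proof -
    obtain T0 where T0: "T0 \<in> \<G>1 \<union> \<G>2" "T = T0 \<union> - closure U"
      using T unfolding \<G>_def by blast
    then have "\<Inter>\<G>1 \<subseteq> T0 \<or> \<Inter>\<G>2 \<subseteq> T0" by blast
    then have "U \<subseteq> closure T0" using G1(3) G2(3) closure_mono by blast
    also have "closure T0 \<subseteq> closure T" using T0(2) by (intro closure_mono) blast
    finally have "closure U \<subseteq> closure T" by (rule closure_minimal[OF _ closed_closure])
    moreover have "- closure U \<subseteq> closure T" using T0(2) closure_subset[of T] by blast
    ultimately show ?thesis by blast
  qed
  have opens: "open T" if "T \<in> \<G>" for T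
    using that G1(2) G2(2) unfolding \<G>_def by auto
  have "countable \<G>" unfolding \<G>_def using G1(1) G2(1) by simp
  have "euclidean closure_of \<Inter>\<G> = topspace euclidean"
    by (rule Baire_category[OF _ \<open>countable \<G>\<close>])
      (use lc regular_space_euclidean dense opens in auto)
  then have "U \<inter> \<Inter>\<G> \<noteq> {}"
    using open_Int_closure_eq_empty[OF U(1), of "\<Inter>\<G>"] U(2) by auto
  then obtain p where "p \<in> U" "p \<in> \<Inter>\<G>" by blast
  then have "p \<in> \<Inter>\<G>1 \<inter> \<Inter>\<G>2" using closure_subset[of U] unfolding \<G>_def by auto
  then show ?thesis using G1(4) G2(4) by blast
qed

text \<open>Some \<open>E i\<close> is dense in an open \<open>W \<subseteq> V\<close>. Either \<open>W\<close> minus the closures of the other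
  members is a nonempty open subset of \<open>E i\<close>, or some other \<open>E j\<close> is dense in an open subset of
  \<open>W\<close> as well, which Baire's theorem forbids.\<close>
lemma finite_gdelta_partition_interior:
  fixes E :: "'i \<Rightarrow> 'a::metric_space set"
  assumes lc: "locally_compact_space (euclidean :: 'a topology)"
    and "finite I"
    and gdelta: "\<And>i. i \<in> I \<Longrightarrow> gdelta_in euclidean (E i)"
    and disjoint: "\<And>i j. i \<in> I \<Longrightarrow> j \<in> I \<Longrightarrow> i \<noteq> j \<Longrightarrow> E i \<inter> E j = {}"
    and V: "open V" "V \<noteq> {}" "V \<subseteq> (\<Union>i\<in>I. E i)"
  shows "\<exists>i\<in>I. interior (E i) \<inter> V \<noteq> {}"
proof -
  have "\<exists>i\<in>I. interior (closure (E i)) \<inter> V \<noteq> {}"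
    using V closure_subset by (intro finite_closed_cover_interior[OF \<open>finite I\<close>]) auto
  then obtain i where i: "i \<in> I" and Wi: "interior (closure (E i)) \<inter> V \<noteq> {}" by blast
  define W where "W = interior (closure (E i)) \<inter> V"
  have W: "open W" "W \<noteq> {}" "W \<subseteq> V" "W \<subseteq> closure (E i)"
    unfolding W_def using Wi V(1) interior_subset by auto
  define W' where "W' = W - (\<Union>j\<in>I - {i}. closure (E j))"
  show ?thesis
  proof (cases "W' = {}")
    case False
    have "W' \<subseteq> E i"
    proof
      fix x assume x: "x \<in> W'"
      then obtain j where "j \<in> I" "x \<in> E j" using V(3) W(3) unfolding W'_def by blast
      moreover have "x \<notin> E k" if "k \<in> I - {i}" for k
        using x that closure_subset[of "E k"] unfolding W'_def by blast
      ultimately show "x \<in> E i" by blast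
    qed
    moreover have "open W'" unfolding W'_def using W(1) \<open>finite I\<close>
      by (intro open_Diff closed_UN) auto
    ultimately have "W' \<subseteq> interior (E i)" by (rule interior_maximal)
    moreover have "W' \<subseteq> V" using W(3) unfolding W'_def by blast
    ultimately show ?thesis using False i by blast
  next
    case True
    have "\<exists>j\<in>I - {i}. interior (closure (E j)) \<inter> W \<noteq> {}"
      using True W(1,2) \<open>finite I\<close> unfolding W'_def by (intro finite_closed_cover_interior) auto
    then obtain j where j: "j \<in> I" "j \<noteq> i" and Wj: "interior (closure (E j)) \<inter> W \<noteq> {}" by blast
    define W'' where "W'' = interior (closure (E j)) \<inter> W"
    have W'': "open W''" "W'' \<noteq> {}" "W'' \<subseteq> closure (E i)" "W'' \<subseteq> closure (E j)"
      unfolding W''_def using Wj W(1,4) interior_subset by auto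
    have "E i \<inter> E j \<noteq> {}"
      by (rule gdelta_dense_Int_nonempty[OF lc W''(1,2) gdelta[OF i] W''(3) gdelta[OF j(1)] W''(4)])
    then show ?thesis using disjoint[OF i j(1)] j(2) by blast
  qed
qed

locale compact_dynamics =
  fixes f :: "'a::metric_space \<Rightarrow> 'a"
  assumes compact_space: "compact (UNIV :: 'a set)"
    and continuous: "continuous_on UNIV f"
begin

lemma continuous_at_delta:
  assumes "e > 0"
  obtains d where "d > 0" "\<And>y. dist y x < d \<Longrightarrow> dist (f y) (f x) < e"
  using continuous assms unfolding continuous_on_iff by (metis UNIV_I)

lemma isCont_map: "isCont f x"
  using continuous continuous_on_eq_continuous_at[OF open_UNIV] by blast

lemma continuous_funpow: "continuous_on UNIV (f ^^ n)"
  by (induction n) (auto intro: continuous_on_compose2[OF continuous])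

lemma convergent_subsequence:
  fixes s :: "nat \<Rightarrow> 'a"
  obtains l and r :: "nat \<Rightarrow> nat" where "strict_mono r" "(s \<circ> r) \<longlonglongrightarrow> l"
  using seq_compactE[OF compact_imp_seq_compact[OF compact_space], of s] by blast

text \<open>Continuity of \<open>f\<close> lets an \<open>\<epsilon>\<close>-chain from a point near \<open>y\<close> start at \<open>y\<close> itself.\<close>
lemma chain_rel_approx:
  assumes approx: "\<And>e d. e > 0 \<Longrightarrow> d > 0 \<Longrightarrow>
    \<exists>y' z'. dist y' y < d \<and> dist z' z < d \<and> eps_chain f e y' z'"
  shows "(y, z) \<in> chain_rel f"
  unfolding chain_rel_iff_eps_chain
proof (intro allI impI)
  fix e :: real assume "e > 0"
  then obtain d where "d > 0" and d: "\<And>y'. dist y' y < d \<Longrightarrow> dist (f y') (f y) < e / 3"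
    using continuous_at_delta[of "e / 3" y] by auto
  obtain y' z' where y': "dist y' y < d" and z': "dist z' z < e / 3"
    and chain: "eps_chain f (e / 3) y' z'"
    using approx[of "e / 3" "min d (e / 3)"] \<open>e > 0\<close> \<open>d > 0\<close> by auto
  have "dist (f y) (f y') \<le> e / 3" using d[OF y'] by (simp add: dist_commute)
  then have "eps_chain f (e / 3 + e / 3) y z'" by (rule eps_chain_extend_start[OF chain])
  moreover have "dist z' z \<le> e / 3" using z' by simp
  ultimately have "eps_chain f (e / 3 + e / 3 + e / 3) y z" by (rule eps_chain_extend_end)
  then show "eps_chain f e y z" by simp
qed

lemma closed_chain_rel: "closed (chain_rel f)"
proof -
  have "(y, z) \<in> chain_rel f" if yz: "(y, z) \<in> closure (chain_rel f)" for y z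
  proof (rule chain_rel_approx)
    fix e d :: real assume "e > 0" "d > 0"
    obtain q where q: "q \<in> chain_rel f" "dist q (y, z) < d"
      using yz \<open>d > 0\<close> unfolding closure_approachable by blast
    have "dist (fst q) y < d" "dist (snd q) z < d"
      using dist_fst_le[of q "(y, z)"] dist_snd_le[of q "(y, z)"] q(2) by auto
    moreover have "eps_chain f e (fst q) (snd q)"
      using q(1) \<open>e > 0\<close> by (metis chain_rel_iff_eps_chain prod.collapse)
    ultimately show "\<exists>y' z'. dist y' y < d \<and> dist z' z < d \<and> eps_chain f e y' z'" by blast
  qed
  then show ?thesis using closure_subset_eq by (metis subrelI)
qed

lemma chain_rel_limit:
  assumes "ys \<longlonglongrightarrow> y" "zs \<longlonglongrightarrow> z" "es \<longlonglongrightarrow> 0" "\<And>k. eps_chain f (es k) (ys k) (zs k)"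
  shows "(y, z) \<in> chain_rel f"
proof (rule chain_rel_approx)
  fix e d :: real assume "e > 0" "d > 0"
  have "\<forall>\<^sub>F k in sequentially. dist (ys k) y < d" "\<forall>\<^sub>F k in sequentially. dist (zs k) z < d"
    using assms(1,2) \<open>d > 0\<close> by (auto intro: tendstoD)
  moreover have "\<forall>\<^sub>F k in sequentially. es k < e" using assms(3) \<open>e > 0\<close> by (rule order_tendstoD)
  ultimately have "\<forall>\<^sub>F k in sequentially. dist (ys k) y < d \<and> dist (zs k) z < d \<and> es k < e"
    by eventually_elim blast
  then obtain k where "dist (ys k) y < d" "dist (zs k) z < d" "es k < e"
    unfolding eventually_sequentially by blast
  then show "\<exists>y' z'. dist y' y < d \<and> dist z' z < d \<and> eps_chain f e y' z'"
    using eps_chain_mono[OF assms(4)[of k]] by (meson less_imp_le)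
qed

lemma closed_chain_class: "closed (chain_class f x)"
proof -
  have "chain_class f x =
      (\<lambda>y. (y, y)) -` chain_rel f \<inter> Pair x -` chain_rel f \<inter> (\<lambda>y. (y, x)) -` chain_rel f"
    unfolding chain_class_def chain_recurrent_def by auto
  moreover have "closed ((\<lambda>y. (y, y)) -` chain_rel f)" "closed (Pair x -` chain_rel f)"
    "closed ((\<lambda>y. (y, x)) -` chain_rel f)"
    by (intro continuous_closed_vimage closed_chain_rel continuous_intros; simp)+
  ultimately show ?thesis by (simp add: closed_Int)
qed

lemma closed_basic_set: "B \<in> basic_sets f \<Longrightarrow> closed B"
  unfolding basic_sets_eq using closed_chain_class by blast

lemma omega_limit_nonempty: "omega_limit f x \<noteq> {}"
proof -
  obtain l r where r: "strict_mono r" and lim: "((\<lambda>k. (f ^^ Suc k) x) \<circ> r) \<longlonglongrightarrow> l"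
    using convergent_subsequence by blast
  have "k \<le> Suc (r k)" for k using seq_suble[OF r, of k] by simp
  then have "l \<in> omega_limit f x"
    using lim by (intro omega_limitI_sequentially[of "\<lambda>k. Suc (r k)"]) (auto simp: o_def)
  then show ?thesis by blast
qed

lemma omega_limit_chain_rel:
  assumes "y \<in> omega_limit f x" "z \<in> omega_limit f x"
  shows "(y, z) \<in> chain_rel f"
proof (rule chain_rel_approx)
  fix e d :: real assume "e > 0" "d > 0"
  obtain n where n: "dist ((f ^^ n) x) y < d"
    using assms(1) \<open>d > 0\<close> unfolding omega_limit_def by blast
  obtain m where m: "m \<ge> Suc n" "dist ((f ^^ m) x) z < d"
    using assms(2) \<open>d > 0\<close> unfolding omega_limit_def by blast
  have "eps_chain f e ((f ^^ n) x) ((f ^^ m) x)"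
    using eps_chain_orbit[of n m f x] m(1) \<open>e > 0\<close> by (auto intro: eps_chain_mono)
  then show "\<exists>y' z'. dist y' y < d \<and> dist z' z < d \<and> eps_chain f e y' z'"
    using n m(2) by blast
qed

lemma omega_limit_subset_chain_class:
  assumes "y \<in> omega_limit f x"
  shows "chain_recurrent f y" "omega_limit f x \<subseteq> chain_class f y"
proof -
  show "chain_recurrent f y"
    unfolding chain_recurrent_def by (rule omega_limit_chain_rel[OF assms assms])
  show "omega_limit f x \<subseteq> chain_class f y"
  proof
    fix z assume "z \<in> omega_limit f x"
    with assms show "z \<in> chain_class f y"
      unfolding chain_class_def chain_recurrent_def by (simp add: omega_limit_chain_rel)
  qed
qed

lemma omega_limit_in_basic_set: "\<exists>B\<in>basic_sets f. omega_limit f x \<subseteq> B"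
proof -
  obtain y where "y \<in> omega_limit f x" using omega_limit_nonempty by blast
  then show ?thesis
    using omega_limit_subset_chain_class unfolding basic_sets_eq by blast
qed

lemma omega_limit_subset_basic_set_iff:
  assumes "B \<in> basic_sets f"
  shows "omega_limit f x \<subseteq> B \<longleftrightarrow> omega_limit f x \<inter> B \<noteq> {}"
proof
  show "omega_limit f x \<subseteq> B \<Longrightarrow> omega_limit f x \<inter> B \<noteq> {}"
    using omega_limit_nonempty by blast
next
  assume "omega_limit f x \<inter> B \<noteq> {}"
  then obtain y where "y \<in> omega_limit f x" "y \<in> B" by blast
  then show "omega_limit f x \<subseteq> B"
    using omega_limit_subset_chain_class(2) basic_set_eq_chain_class[OF assms] by blast
qed

subsection \<open>Density of the basins\<close>

lemma omega_limit_meets_closed_iff: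
  assumes "closed B" "B \<noteq> {}"
  shows "omega_limit f x \<inter> B \<noteq> {} \<longleftrightarrow>
    (\<forall>k N. \<exists>n\<ge>N. infdist ((f ^^ n) x) B < inverse (Suc k))"
proof
  assume "omega_limit f x \<inter> B \<noteq> {}"
  then obtain y where y: "y \<in> omega_limit f x" "y \<in> B" by blast
  show "\<forall>k N. \<exists>n\<ge>N. infdist ((f ^^ n) x) B < inverse (Suc k)"
  proof (intro allI)
    fix k N :: nat
    have "inverse (real (Suc k)) > 0" by simp
    then obtain n where "n \<ge> N" "dist ((f ^^ n) x) y < inverse (Suc k)"
      using y(1) unfolding omega_limit_def by blast
    then show "\<exists>n\<ge>N. infdist ((f ^^ n) x) B < inverse (Suc k)"
      using infdist_le[OF y(2)] by (meson order_le_less_trans)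
  qed
next
  assume "\<forall>k N. \<exists>n\<ge>N. infdist ((f ^^ n) x) B < inverse (Suc k)"
  then have "\<forall>k. \<exists>m. m \<ge> k \<and> infdist ((f ^^ m) x) B < inverse (Suc k)" by blast
  then obtain n where n: "\<And>k. n k \<ge> k" "\<And>k. infdist ((f ^^ n k) x) B < inverse (Suc k)"
    by metis
  obtain l r where r: "strict_mono r" and lim: "((\<lambda>k. (f ^^ n k) x) \<circ> r) \<longlonglongrightarrow> l"
    using convergent_subsequence by blast
  have "k \<le> n (r k)" for k using seq_suble[OF r, of k] n(1)[of "r k"] by simp
  then have "l \<in> omega_limit f x"
    using lim by (intro omega_limitI_sequentially[of "n \<circ> r"]) (auto simp: o_def)
  moreover have "infdist l B \<le> 0"
  proof (rule LIMSEQ_le)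
    show "(\<lambda>k. infdist ((f ^^ n (r k)) x) B) \<longlonglongrightarrow> infdist l B"
      using lim by (intro tendsto_infdist) (simp add: o_def)
    show "(\<lambda>k. inverse (real (Suc (r k)))) \<longlonglongrightarrow> 0"
      using LIMSEQ_subseq_LIMSEQ[OF LIMSEQ_inverse_real_of_nat r] by (simp add: o_def)
    show "\<exists>N. \<forall>k\<ge>N. infdist ((f ^^ n (r k)) x) B \<le> inverse (real (Suc (r k)))"
      using n(2) less_imp_le by blast
  qed
  then have "l \<in> B"
    using in_closed_iff_infdist_zero[OF assms] infdist_nonneg[of l B] by simp
  ultimately show "omega_limit f x \<inter> B \<noteq> {}" by blast
qed

lemma gdelta_omega_limit_meets:
  assumes "closed B" "B \<noteq> {}"
  shows "gdelta_in euclidean {x. omega_limit f x \<inter> B \<noteq> {}}"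
  unfolding gdelta_in_euclidean_iff
proof (intro exI conjI)
  define T where "T k N = (\<Union>n\<in>{N..}. {x. infdist ((f ^^ n) x) B < inverse (Suc k)})"
    for k N :: nat
  show "countable (range (case_prod T))" by simp
  show "\<forall>S\<in>range (case_prod T). open S"
    unfolding T_def
    by (auto intro!: open_UN open_Collect_less continuous_on_infdist continuous_funpow
        continuous_on_const)
  show "\<Inter>(range (case_prod T)) = {x. omega_limit f x \<inter> B \<noteq> {}}"
    unfolding omega_limit_meets_closed_iff[OF assms] T_def by auto
qed

lemma basins_dense:
  assumes "finite (basic_sets f)"
  shows "closure (\<Union>B\<in>basic_sets f. basin f B) = UNIV"
proof -
  have lc: "locally_compact_space (euclidean :: 'a topology)"
    by (rule compact_imp_locally_compact_space) (simp add: compact_space_def compact_space)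
  have "\<exists>y\<in>(\<Union>B\<in>basic_sets f. basin f B). dist y x < e" if "e > 0" for x e
  proof -
    have "\<exists>B\<in>basic_sets f. interior {x. omega_limit f x \<subseteq> B} \<inter> ball x e \<noteq> {}"
    proof (rule finite_gdelta_partition_interior[OF lc assms])
      fix B assume B: "B \<in> basic_sets f"
      then have "{x. omega_limit f x \<subseteq> B} = {x. omega_limit f x \<inter> B \<noteq> {}}"
        using omega_limit_subset_basic_set_iff by blast
      then show "gdelta_in euclidean {x. omega_limit f x \<subseteq> B}"
        using gdelta_omega_limit_meets[OF closed_basic_set[OF B] basic_set_nonempty[OF B]] by simp
    next
      fix B B' assume "B \<in> basic_sets f" "B' \<in> basic_sets f" "B \<noteq> B'"
      then show "{x. omega_limit f x \<subseteq> B} \<inter> {x. omega_limit f x \<subseteq> B'} = {}"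
        using omega_limit_nonempty basic_sets_disjoint by blast
    next
      show "ball x e \<subseteq> (\<Union>B\<in>basic_sets f. {x. omega_limit f x \<subseteq> B})"
        using omega_limit_in_basic_set by blast
    qed (use \<open>e > 0\<close> in auto)
    then show ?thesis unfolding basin_def by (auto simp: dist_commute)
  qed
  then have "x \<in> closure (\<Union>B\<in>basic_sets f. basin f B)" for x
    unfolding closure_approachable by blast
  then show ?thesis by blast
qed

subsection \<open>Terminal basic sets are attractors\<close>

lemma image_closure_chain_nbhd:
  assumes "\<epsilon> > 0"
  shows "f ` closure (chain_nbhd f B \<epsilon>) \<subseteq> chain_nbhd f B \<epsilon>"
proof
  fix w assume "w \<in> f ` closure (chain_nbhd f B \<epsilon>)"
  then obtain z where z: "z \<in> closure (chain_nbhd f B \<epsilon>)" "w = f z" by blast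
  obtain d where "d > 0" and d: "\<And>y. dist y z < d \<Longrightarrow> dist (f y) (f z) < \<epsilon> / 2"
    using continuous_at_delta[of "\<epsilon> / 2" z] assms by auto
  obtain y where y: "y \<in> chain_nbhd f B \<epsilon>" "dist y z < d"
    using z(1) \<open>d > 0\<close> unfolding closure_approachable by blast
  obtain b e where b: "b \<in> B" "e < \<epsilon>" "eps_chain f e b y"
    using y(1) unfolding chain_nbhd_def by blast
  define e' where "e' = max e (\<epsilon> / 2)"
  have "eps_chain f e' b y" by (rule eps_chain_mono[OF b(3)]) (simp add: e'_def)
  moreover have "eps_chain f e' y (f z)"
    using d[OF y(2)] by (intro eps_chain_step) (simp add: e'_def)
  ultimately have "eps_chain f e' b w" unfolding z(2) by (rule eps_chain_trans)
  moreover have "e' < \<epsilon>" using b(2) assms by (simp add: e'_def)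
  ultimately show "w \<in> chain_nbhd f B \<epsilon>" unfolding chain_nbhd_def using b(1) by blast
qed

lemma Inter_chain_nbhd:
  assumes "closed B" "\<And>\<epsilon>. \<epsilon> > 0 \<Longrightarrow> p \<in> chain_nbhd f B \<epsilon>"
  shows "\<exists>b\<in>B. (b, p) \<in> chain_rel f"
proof -
  have "\<exists>b. b \<in> B \<and> eps_chain f (inverse (Suc k)) b p" for k
  proof -
    obtain b e where "b \<in> B" "e < inverse (Suc k)" "eps_chain f e b p"
      using assms(2)[of "inverse (Suc k)"] unfolding chain_nbhd_def by auto
    then show ?thesis by (meson eps_chain_mono less_imp_le)
  qed
  then obtain bs where bs: "\<And>k. bs k \<in> B" "\<And>k. eps_chain f (inverse (Suc k)) (bs k) p" by metis
  obtain b r where r: "strict_mono r" and lim: "(bs \<circ> r) \<longlonglongrightarrow> b"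
    using convergent_subsequence by blast
  have "b \<in> B" using closed_sequentially[OF assms(1) _ lim] bs(1) by simp
  moreover have "(b, p) \<in> chain_rel f"
  proof (rule chain_rel_limit[OF lim tendsto_const])
    show "((\<lambda>k. inverse (real (Suc k))) \<circ> r) \<longlonglongrightarrow> 0"
      by (rule LIMSEQ_subseq_LIMSEQ[OF LIMSEQ_inverse_real_of_nat r])
  qed (unfold o_def, rule bs(2))
  ultimately show ?thesis by blast
qed

lemma chain_recurrent_chain_preimage:
  assumes "chain_recurrent f b"
  obtains p where "f p = b" "(b, p) \<in> chain_rel f"
proof -
  have "\<exists>p. dist (f p) b \<le> inverse (Suc k) \<and> eps_chain f (inverse (Suc k)) b p" for k
  proof -
    have chain: "eps_chain f (inverse (Suc k)) b b"
      using assms unfolding chain_recurrent_def chain_rel_iff_eps_chain by simp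
    then obtain p where "dist (f p) b \<le> inverse (Suc k)" "p = b \<or> eps_chain f (inverse (Suc k)) b p"
      by (rule eps_chain_last_step)
    then show ?thesis using chain by blast
  qed
  then obtain ps where ps: "\<And>k. dist (f (ps k)) b \<le> inverse (Suc k)"
    "\<And>k. eps_chain f (inverse (Suc k)) b (ps k)" by metis
  obtain p r where r: "strict_mono r" and lim: "(ps \<circ> r) \<longlonglongrightarrow> p"
    using convergent_subsequence by blast
  have inv: "((\<lambda>k. inverse (real (Suc k))) \<circ> r) \<longlonglongrightarrow> 0"
    by (rule LIMSEQ_subseq_LIMSEQ[OF LIMSEQ_inverse_real_of_nat r])
  have "(\<lambda>k. f ((ps \<circ> r) k)) \<longlonglongrightarrow> f p" by (rule isCont_tendsto_compose[OF isCont_map lim])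
  moreover have "(\<lambda>k. f ((ps \<circ> r) k)) \<longlonglongrightarrow> b"
  proof (rule tendsto_dist_iff[THEN iffD2])
    show "(\<lambda>k. dist (f ((ps \<circ> r) k)) b) \<longlonglongrightarrow> 0"
      by (rule tendsto_sandwich[OF _ _ tendsto_const inv])
        (intro always_eventually allI; simp add: ps(1)[simplified])+
  qed
  ultimately have "f p = b" by (rule LIMSEQ_unique)
  moreover have "(b, p) \<in> chain_rel f"
    by (rule chain_rel_limit[OF tendsto_const lim inv]) (unfold o_def, rule ps(2))
  ultimately show thesis by (rule that)
qed

lemma terminal_image:
  assumes "terminal f B"
  shows "f ` B = B"
proof
  show "f ` B \<subseteq> B" using terminalD(2)[OF assms] chain_rel_step by blast
  show "B \<subseteq> f ` B"
  proof
    fix b assume "b \<in> B"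
    then obtain p where "f p = b" "(b, p) \<in> chain_rel f"
      using chain_recurrent_chain_preimage basic_set_chain_recurrent[OF terminalD(1)[OF assms]]
        by blast
    then show "b \<in> f ` B" using terminalD(2)[OF assms \<open>b \<in> B\<close>] by blast
  qed
qed

text \<open>This is where finiteness of the set of basic sets is used.\<close>
lemma terminal_isolated:
  assumes "terminal f B" "finite (basic_sets f)"
  obtains \<epsilon> where "\<epsilon> > 0" "\<And>y. y \<in> chain_nbhd f B \<epsilon> \<Longrightarrow> chain_recurrent f y \<Longrightarrow> y \<in> B"
proof -
  have "\<forall>\<^sub>F \<epsilon> in at_right 0. \<not> B' \<subseteq> chain_nbhd f B \<epsilon>" if B': "B' \<in> basic_sets f - {B}" for B'
  proof -
    obtain p where "p \<in> B'" using basic_set_nonempty B' by blast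
    then have "p \<notin> B" using basic_sets_disjoint[OF terminalD(1)[OF assms(1)]] B' by blast
    then obtain \<epsilon>0 where "\<epsilon>0 > 0" "p \<notin> chain_nbhd f B \<epsilon>0"
      using Inter_chain_nbhd[OF closed_basic_set[OF terminalD(1)[OF assms(1)]]]
        terminalD(2)[OF assms(1)]
      by blast
    then have "\<not> B' \<subseteq> chain_nbhd f B \<epsilon>" if "\<epsilon> < \<epsilon>0" for \<epsilon>
      using \<open>p \<in> B'\<close> chain_nbhd_mono[of \<epsilon> \<epsilon>0 f B] that by auto
    then show ?thesis
      unfolding eventually_at_right_field using \<open>\<epsilon>0 > 0\<close> by blast
  qed
  then have "\<forall>\<^sub>F \<epsilon> in at_right 0. \<forall>B'\<in>basic_sets f - {B}. \<not> B' \<subseteq> chain_nbhd f B \<epsilon>"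
    using assms(2) by (intro eventually_ball_finite) auto
  moreover have "\<forall>\<^sub>F \<epsilon> in at_right 0. (0::real) < \<epsilon>" by (rule eventually_at_right_less)
  ultimately have "\<forall>\<^sub>F \<epsilon> in at_right 0. 0 < \<epsilon> \<and> (\<forall>B'\<in>basic_sets f - {B}. \<not> B' \<subseteq> chain_nbhd f B \<epsilon>)"
    by eventually_elim blast
  then obtain \<epsilon> :: real where "\<epsilon> > 0" and sep: "\<forall>B'\<in>basic_sets f - {B}. \<not> B' \<subseteq> chain_nbhd f B \<epsilon>"
    using eventually_happens'[OF trivial_limit_at_right_real] by blast
  have "y \<in> B" if "y \<in> chain_nbhd f B \<epsilon>" "chain_recurrent f y" for y
  proof -
    have "chain_class f y \<subseteq> chain_nbhd f B \<epsilon>"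
      using chain_nbhd_chain_rel[OF that(1)] unfolding chain_class_def by blast
    then have "chain_class f y = B"
      using sep basic_sets_eq that(2) by blast
    then show "y \<in> B" using mem_chain_class_self[OF that(2)] by simp
  qed
  with \<open>\<epsilon> > 0\<close> show thesis by (rule that)
qed

lemma closed_funpow_image:
  assumes "closed U"
  shows "closed ((f ^^ n) ` U)"
proof -
  have "compact U" using compact_Int_closed[OF compact_space assms] by simp
  then have "compact ((f ^^ n) ` U)"
    by (rule compact_continuous_image[OF continuous_on_subset[OF continuous_funpow subset_UNIV]])
  then show ?thesis by (rule compact_imp_closed)
qed

lemma omega_limit_subset_trapped_core:
  assumes "closed U" "f ` U \<subseteq> U" "x \<in> U"
  shows "omega_limit f x \<subseteq> (\<Inter>n. (f ^^ n) ` U)"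
proof (intro subsetI INT_I)
  fix y n assume y: "y \<in> omega_limit f x"
  have "\<exists>z\<in>(f ^^ n) ` U. dist z y < e" if "e > 0" for e
  proof -
    obtain m where m: "m \<ge> n" "dist ((f ^^ m) x) y < e"
      using y \<open>e > 0\<close> unfolding omega_limit_def by blast
    have "(f ^^ m) x = (f ^^ n) ((f ^^ (m - n)) x)"
      using m(1) by (metis funpow_add le_add_diff_inverse comp_apply)
    moreover have "(f ^^ (m - n)) x \<in> U" using funpow_image_subset[OF assms(2)] assms(3) by blast
    ultimately show ?thesis using m(2) by auto
  qed
  then show "y \<in> (f ^^ n) ` U"
    using closed_approachable[OF closed_funpow_image[OF assms(1)]] by blast
qed

lemma trapped_core_backward_invariant:
  assumes "closed U" "f ` U \<subseteq> U"
  shows "(\<Inter>n. (f ^^ n) ` U) \<subseteq> f ` (\<Inter>n. (f ^^ n) ` U)"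
proof
  fix a assume a: "a \<in> (\<Inter>n. (f ^^ n) ` U)"
  define K where "K n = (f ^^ n) ` U \<inter> f -` {a}" for n
  have "(\<Inter>n. K n) \<noteq> {}"
  proof (rule nested_closed_Inter_nonempty[OF compact_space])
    show "closed (K n)" for n
      unfolding K_def
        by (intro closed_Int closed_funpow_image assms(1) continuous_closed_vimage isCont_map) simp
    show "K n \<noteq> {}" for n
    proof -
      have "a \<in> (f ^^ Suc n) ` U" using a by blast
      then have "a \<in> f ` (f ^^ n) ` U" by (simp add: image_image)
      then show ?thesis unfolding K_def by blast
    qed
    show "K n \<subseteq> K m" if "m \<le> n" for m n
      unfolding K_def using funpow_image_antimono[OF assms(2) that] by blast
  qed
  then show "a \<in> f ` (\<Inter>n. (f ^^ n) ` U)" unfolding K_def by blast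
qed

text \<open>The witness is an accumulation point of a backward orbit of \<open>a\<close> inside \<open>A\<close>.\<close>
lemma backward_invariant_chain_source:
  assumes "closed A" "A \<subseteq> f ` A" "a \<in> A"
  obtains y where "y \<in> A" "chain_recurrent f y" "(y, a) \<in> chain_rel f"
proof -
  obtain xs where xs: "xs 0 = a" "\<And>k. xs k \<in> A" "\<And>k. f (xs (Suc k)) = xs k"
    using backward_orbit[OF assms(2,3)] by blast
  have xs_chain: "(xs n, xs m) \<in> chain_rel f" if "m < n" for m n
    using chain_rel_orbit[of 0 "n - m" f "xs n"] that
      backward_orbit_funpow[where xs = xs and d = "n - m" and k = m, OF xs(3)]
    by simp
  obtain y r where r: "strict_mono r" and lim: "(xs \<circ> r) \<longlonglongrightarrow> y"
    using convergent_subsequence by blast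
  have lim_Suc: "(\<lambda>k. xs (r (Suc k))) \<longlonglongrightarrow> y" using LIMSEQ_Suc[OF lim] by (simp add: o_def)
  have "y \<in> A" using closed_sequentially[OF assms(1) _ lim] xs(2) by simp
  moreover have "(y, y) \<in> chain_rel f"
  proof (rule closed_sequentially[OF closed_chain_rel])
    show "(\<lambda>k. (xs (r (Suc k)), xs (r k))) \<longlonglongrightarrow> (y, y)"
      using lim_Suc lim by (intro tendsto_Pair) (simp_all add: o_def)
    show "(xs (r (Suc k)), xs (r k)) \<in> chain_rel f" for k
      using r xs_chain by (simp add: strict_mono_Suc_iff)
  qed
  moreover have "(y, a) \<in> chain_rel f"
  proof (rule closed_sequentially[OF closed_chain_rel])
    show "(\<lambda>k. (xs (r (Suc k)), a)) \<longlonglongrightarrow> (y, a)"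
      using lim_Suc by (intro tendsto_Pair tendsto_const)
    have "0 < r (Suc k)" for k using strict_monoD[OF r, of 0 "Suc k"] by simp
    then show "(xs (r (Suc k)), a) \<in> chain_rel f" for k
      using xs_chain[of 0] xs(1) by simp
  qed
  ultimately show thesis using that unfolding chain_recurrent_def by blast
qed

lemma attractor_visible:
  assumes "attractor f A" "A \<noteq> {}"
  shows "visible f A"
proof -
  obtain U where U: "closed U" "f ` U \<subseteq> interior U" "A = (\<Inter>n. (f ^^ n) ` U)"
    using assms(1) unfolding attractor_def by blast
  then have "f ` U \<subseteq> U" using interior_subset by blast
  then have "U \<subseteq> {x. omega_limit f x \<subseteq> A}"
    using omega_limit_subset_trapped_core U(1,3) by blast
  then have "interior U \<subseteq> basin f A" unfolding basin_def by (rule interior_mono)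
  moreover obtain a where "a \<in> A" using assms(2) by blast
  then have "f a \<in> interior U" using U(2,3) trapped_core_subset[of f U] by blast
  ultimately show ?thesis unfolding visible_def by blast
qed

lemma terminal_attractor:
  assumes "terminal f B" "finite (basic_sets f)"
  shows "attractor f B"
proof -
  obtain \<epsilon> where "\<epsilon> > 0" and isolated: "\<And>y. y \<in> chain_nbhd f B \<epsilon> \<Longrightarrow> chain_recurrent f y \<Longrightarrow> y \<in> B"
    using terminal_isolated[OF assms] by blast
  define U where "U = closure (chain_nbhd f B (\<epsilon> / 2))"
  have "closed U" unfolding U_def by simp
  have "f ` U \<subseteq> chain_nbhd f B (\<epsilon> / 2)"
    unfolding U_def using \<open>\<epsilon> > 0\<close> by (intro image_closure_chain_nbhd) simp
  also have "\<dots> \<subseteq> interior U"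
    unfolding U_def by (intro interior_maximal closure_subset open_chain_nbhd)
  finally have trapping: "f ` U \<subseteq> interior U" .
  then have "f ` U \<subseteq> U" using interior_subset by blast
  have "U \<subseteq> chain_nbhd f B \<epsilon>"
    using closure_chain_nbhd_subset[of "\<epsilon> / 2" f B] \<open>\<epsilon> > 0\<close> unfolding U_def by simp
  define A where "A = (\<Inter>n. (f ^^ n) ` U)"
  have "B \<subseteq> chain_nbhd f B (\<epsilon> / 2)"
    using basic_set_chain_recurrent[OF terminalD(1)[OF assms(1)]] \<open>\<epsilon> > 0\<close>
    by (intro subset_chain_nbhd) auto
  then have "B \<subseteq> U" unfolding U_def using closure_subset by blast
  then have "B \<subseteq> A"
    unfolding A_def using funpow_image_invariant[OF terminal_image[OF assms(1)]] by blast
  moreover have "A \<subseteq> B"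
  proof
    fix a assume "a \<in> A"
    have "closed A" unfolding A_def using \<open>closed U\<close> by (simp add: closed_INT closed_funpow_image)
    moreover have "A \<subseteq> f ` A"
      unfolding A_def by (rule trapped_core_backward_invariant[OF \<open>closed U\<close> \<open>f ` U \<subseteq> U\<close>])
    ultimately obtain y where "y \<in> A" "chain_recurrent f y" "(y, a) \<in> chain_rel f"
      using backward_invariant_chain_source \<open>a \<in> A\<close> by blast
    moreover have "y \<in> chain_nbhd f B \<epsilon>"
      using \<open>y \<in> A\<close> trapped_core_subset[of f U] \<open>U \<subseteq> chain_nbhd f B \<epsilon>\<close> unfolding A_def by blast
    ultimately show "a \<in> B" using isolated terminalD(2)[OF assms(1)] by blast
  qed
  ultimately show ?thesis
    unfolding attractor_def A_def using \<open>closed U\<close> trapping by blast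
qed

end

theorem theorem2p1:
  fixes f :: "'a::metric_space \<Rightarrow> 'a"
  assumes "compact (UNIV :: 'a set)"
    and "continuous_on UNIV f"
    and "finite (basic_sets f)"
  shows "(\<forall>B. terminal f B \<longrightarrow> attractor f B \<and> visible f B)
    \<and> open (\<Union>B\<in>basic_sets f. basin f B)
    \<and> closure (\<Union>B\<in>basic_sets f. basin f B) = UNIV"
proof -
  interpret compact_dynamics f using assms(1,2) by unfold_locales
  have "attractor f B \<and> visible f B" if "terminal f B" for B
    using terminal_attractor[OF that assms(3)] attractor_visible
      basic_set_nonempty[OF terminalD(1)[OF that]] by blast
  moreover have "open (\<Union>B\<in>basic_sets f. basin f B)"
    unfolding basin_def by (intro open_UN ballI open_interior)
  ultimately show ?thesis using basins_dense[OF assms(3)] by blast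
qed

end
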